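(* Let $a_1, a_2, \ldots \in (0,1)$ be independent random variables with common c.d.f. $G$ such that, for some $\epsilon \in (0,1)$, $G$ is continuously differentiable on $(1-\epsilon,1)$ with derivative satisfying $g(x) = \kappa \beta (1-x)^{\beta-1}(1 + O((1-x)^\nu))$ as $x \to 1-$, for some $\beta > 1$, $\nu > 0$, $\kappa > 0$. For each $N$ let $\widehat a_i = a_i + \widehat\rho_i$, $i = 1,\ldots,N$, where $\widehat\rho_i = \widehat\rho_{i,N}$ are arbitrary random variables, and define $$ G_N(x) := \frac1N\sum_{i=1}^N \mathbf 1(a_i \le x), \qquad \widehat G_N(x) := \frac1N\sum_{i=1}^N \mathbf 1(\widehat a_i \le x). $$ Fix $r > 1$. Assume that as $N\to\infty$, $\delta = \delta_N \to 0$ so that $N\delta^\beta \to \infty$, and that for some $p\ge1$, $$ \max_{1 \le i \le N} \mathbb P(|\widehat\rho_i| > \varepsilon) \le \frac{\chi}{\varepsilon^p} + \chi' \qquad \text{for all } \varepsilon\in(0,1), $$ where $\chi=\chi_N\to0$, $\chi'=\chi'_N\to0$ satisfy $$ \sqrt{N\delta^\beta}\,\max\Big\{\frac{\chi'}{\delta^\beta}, \Big(\frac{\chi}{\delta^{p+\beta}}\Big)^{1/(p+1)}\Big\}\ln\delta \to 0. $$ Then $$ (N\delta^{-\beta})^{1/2}\big(\widehat G_N(1-\delta) - G_N(1-\delta)\big) = o_p(1), $$ $$ (N\delta^{-\beta})^{1/2}\int_{\delta^r}^{\delta}\big(\widehat G_N(1-x) - G_N(1-x)\big)\frac{\mathrm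 dx}{x} = o_p(1). $$
   Context: $o_p(1)$ denotes a sequence of random variables converging to $0$ in probability as $N\to\infty$. *)

theory Defs
  imports "HOL-Probability.Probability" "HOL-Library.Landau_Symbols"
begin

definition emp_cdf :: "nat \<Rightarrow> (nat \<Rightarrow> 'a \<Rightarrow> real) \<Rightarrow> real \<Rightarrow> 'a \<Rightarrow> real" where
  "emp_cdf N X x w = (1 / real N) * (\<Sum>i\<in>{1..N}. if X i w \<le> x then 1 else 0)"

definition o_p_one :: "'a measure \<Rightarrow> (nat \<Rightarrow> 'a \<Rightarrow> real) \<Rightarrow> bool" where
  "o_p_one M Y \<longleftrightarrow> (\<forall>e>0. (\<lambda>N. measure M {w \<in> space M. \<bar>Y N w\<bar> > e}) \<longlonglongrightarrow> 0)"

end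

(*
  An indicator 1(a_i + rho_i <= y) can differ from 1(a_i <= y) only if |rho_i| > e or a_i lies
  within e of y. Taking expectations, the L1 distance between the two empirical c.d.f.s at
  y = 1 - x, 0 < x <= delta, is at most P(|rho_i| > e) + P(|a_i - y| <= e), which is bounded by
  chi / e^p + chi' + C delta^(beta-1) e because the density bound g(x) = O((1-x)^(beta-1)) near 1
  controls the window probability. Integrating against dx/x over [delta^r, delta] costs a factor
  (r - 1) |ln delta|. The truncation level e = delta t with t^(p+1) >= chi / delta^(p+beta) balances the two
  terms, the rate hypothesis makes the normalised L1 bounds vanish, and Markov's inequality
  turns L1 convergence into convergence in probability. Only first moments enter.
*)

theory Submission
  imports Defs
begin

lemma bigO_imp_eventually_le_powr_at_left_1:
  fixes g :: "real \<Rightarrow> real"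
  assumes nu: "nu \<ge> 0"
    and g_asym: "(\<lambda>x. g x - K * (1 - x) powr q) \<in> O[at_left 1](\<lambda>x. (1 - x) powr q * (1 - x) powr nu)"
  shows "\<exists>C\<ge>0. eventually (\<lambda>x. g x \<le> C * (1 - x) powr q) (at_left 1)"
proof -
  obtain c where c: "c > 0" and ev: "eventually (\<lambda>x. norm (g x - K * (1 - x) powr q)
      \<le> c * norm ((1 - x) powr q * (1 - x) powr nu)) (at_left 1)"
    using landau_o.bigE[OF g_asym] by blast
  have "eventually (\<lambda>x. g x \<le> (\<bar>K\<bar> + c) * (1 - x) powr q) (at_left 1)"
    using ev eventually_at_left_real[OF zero_less_one]
  proof eventually_elim
    case (elim x)
    have "(1 - x) powr nu \<le> 1"
      using elim nu by (intro powr_le1) auto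
    then have "norm ((1 - x) powr q * (1 - x) powr nu) \<le> (1 - x) powr q"
      by (simp add: abs_mult mult_left_le)
    then have "\<bar>g x - K * (1 - x) powr q\<bar> \<le> c * (1 - x) powr q"
      using elim c by (auto intro: order_trans mult_left_mono)
    moreover have "K * (1 - x) powr q \<le> \<bar>K\<bar> * (1 - x) powr q"
      by (intro mult_right_mono) auto
    ultimately show ?case
      by (simp add: algebra_simps)
  qed
  then show ?thesis
    using c by (intro exI[of _ "\<bar>K\<bar> + c"]) auto
qed

lemma measure_Ioc_eq_cdf_diff:
  fixes X :: "'a \<Rightarrow> real"
  assumes "finite_measure M" "X \<in> borel_measurable M"
    and cdf: "\<And>x. measure M {w \<in> space M. X w \<le> x} = G x" and "u \<le> v"
  shows "measure M {w \<in> space M. u < X w \<and> X w \<le> v} = G v - G u"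
proof -
  have "{w \<in> space M. u < X w \<and> X w \<le> v} = {w \<in> space M. X w \<le> v} - {w \<in> space M. X w \<le> u}"
    by auto
  also have "measure M \<dots> = measure M {w \<in> space M. X w \<le> v} - measure M {w \<in> space M. X w \<le> u}"
    using assms by (intro finite_measure.finite_measure_Diff) auto
  finally show ?thesis
    by (simp add: cdf)
qed

lemma measure_Ioc_le_by_MVT:
  fixes X :: "'a \<Rightarrow> real"
  assumes "finite_measure M" "X \<in> borel_measurable M"
    and cdf: "\<And>x. measure M {w \<in> space M. X w \<le> x} = G x"
    and G_deriv: "\<And>x. x \<in> {b<..<1} \<Longrightarrow> (G has_real_derivative g x) (at x)"
    and g_le: "\<And>x. x \<in> {b<..<1} \<Longrightarrow> g x \<le> C * (1 - x) powr q"
    and "C \<ge> 0" "q \<ge> 0" and uv: "b < u" "u \<le> v" "v < 1"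
  shows "measure M {w \<in> space M. u < X w \<and> X w \<le> v} \<le> C * (1 - u) powr q * (v - u)"
proof (cases "u = v")
  case True
  then have "{w \<in> space M. u < X w \<and> X w \<le> v} = {}" by auto
  then show ?thesis using True by (simp only:) simp
next
  case False
  have "measure M {w \<in> space M. u < X w \<and> X w \<le> v} = G v - G u"
    using measure_Ioc_eq_cdf_diff assms uv by blast
  also obtain z where z: "u < z" "z < v" and "G v - G u = (v - u) * g z"
    using MVT2[of u v G g] G_deriv uv False by force
  note this(3)
  also have "(v - u) * g z \<le> (v - u) * (C * (1 - z) powr q)"
    using g_le z uv by (intro mult_left_mono) auto
  also have "\<dots> \<le> (v - u) * (C * (1 - u) powr q)"
    using z uv \<open>C \<ge> 0\<close> \<open>q \<ge> 0\<close> by (intro mult_left_mono powr_mono2) auto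
  finally show ?thesis by (simp add: algebra_simps)
qed

lemma measure_Ioc_le_near_1:
  fixes X :: "'a \<Rightarrow> real"
  assumes "prob_space M" and X: "X \<in> borel_measurable M"
    and X_lt_1: "\<And>w. w \<in> space M \<Longrightarrow> X w < 1"
    and cdf: "\<And>x. measure M {w \<in> space M. X w \<le> x} = G x"
    and G_deriv: "\<And>x. x \<in> {b<..<1} \<Longrightarrow> (G has_real_derivative g x) (at x)"
    and g_le: "\<And>x. x \<in> {b<..<1} \<Longrightarrow> g x \<le> C * (1 - x) powr q"
    and C: "C \<ge> 0" "q \<ge> 0" and uv: "b < u" "u \<le> v"
  shows "measure M {w \<in> space M. u < X w \<and> X w \<le> v} \<le> C * (1 - u) powr q * (v - u)"
proof -
  interpret prob_space M by fact
  consider "v < 1" | "1 \<le> v" "u < 1" | "1 \<le> u" by linarith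
  then show ?thesis
  proof cases
    case 1
    show ?thesis
      using measure_Ioc_le_by_MVT[OF finite_measure X cdf G_deriv g_le C uv 1] .
  next
    case 2
    txt \<open>Since \<open>X < 1\<close>, the mass of \<open>(u, v]\<close> is \<open>1 - G u\<close>,
      and \<open>1\<close> is the left limit of \<open>G\<close> at \<open>1\<close>.\<close>
    let ?\<mu> = "distr M borel X"
    interpret \<mu>: real_distribution ?\<mu>
      using X by simp
    have cdf_\<mu>: "cdf ?\<mu> = G"
    proof
      fix x
      have "X -` {..x} \<inter> space M = {w \<in> space M. X w \<le> x}"
        by auto
      then show "cdf ?\<mu> x = G x"
        using X by (simp add: cdf_def measure_distr cdf)
    qed
    have "X -` {..<1} \<inter> space M = space M"
      using X_lt_1 by auto
    then have "measure ?\<mu> {..<1} = 1"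
      using X by (simp add: measure_distr prob_space)
    then have "(G \<longlongrightarrow> 1) (at_left 1)"
      using \<mu>.cdf_at_left[of 1] cdf_\<mu> by simp
    moreover have "eventually (\<lambda>x. G x - G u \<le> C * (1 - u) powr q * (v - u)) (at_left 1)"
      using eventually_at_left_real[OF \<open>u < 1\<close>]
    proof eventually_elim
      case (elim x)
      have "G x - G u = measure M {w \<in> space M. u < X w \<and> X w \<le> x}"
        using measure_Ioc_eq_cdf_diff[OF finite_measure X cdf, of u x] elim by simp
      also have "\<dots> \<le> C * (1 - u) powr q * (x - u)"
        using elim uv by (intro measure_Ioc_le_by_MVT[OF finite_measure X cdf G_deriv g_le C]) auto
      also have "\<dots> \<le> C * (1 - u) powr q * (v - u)"
        using elim 2 C by (intro mult_left_mono) auto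
      finally show ?case .
    qed
    ultimately have "1 - G u \<le> C * (1 - u) powr q * (v - u)"
      by (intro tendsto_upperbound[OF tendsto_diff[OF _ tendsto_const]]) auto
    moreover have "{w \<in> space M. u < X w \<and> X w \<le> v} = space M - {w \<in> space M. X w \<le> u}"
      using X_lt_1 2 by force
    ultimately show ?thesis
      using X by (simp add: prob_compl flip: cdf)
  next
    case 3
    then have "{w \<in> space M. u < X w \<and> X w \<le> v} = {}"
      using X_lt_1 by force
    then show ?thesis
      using 3 uv C by (simp only:) simp
  qed
qed

lemma measure_window_near_1_le:
  fixes X :: "'a \<Rightarrow> real"
  assumes M: "prob_space M" and X: "X \<in> borel_measurable M"
    and X_lt_1: "\<And>w. w \<in> space M \<Longrightarrow> X w < 1"
    and cdf: "\<And>x. measure M {w \<in> space M. X w \<le> x} = G x"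
    and G_deriv: "\<And>x. x \<in> {1 - \<eta><..<1} \<Longrightarrow> (G has_real_derivative g x) (at x)"
    and g_le: "\<And>x. x \<in> {1 - \<eta><..<1} \<Longrightarrow> g x \<le> C * (1 - x) powr (beta - 1)"
    and C: "C \<ge> 0" and beta: "beta \<ge> 1"
    and x: "0 \<le> x" "x \<le> d" and e: "0 < e" "e \<le> d" and d: "2 * d < \<eta>"
  shows "measure M {w \<in> space M. 1 - x - e < X w \<and> X w \<le> 1 - x + e} \<le> C * 2 powr beta * d powr (beta - 1) * e"
proof -
  have "measure M {w \<in> space M. 1 - x - e < X w \<and> X w \<le> 1 - x + e} \<le> C * (x + e) powr (beta - 1) * (2 * e)"
    using measure_Ioc_le_near_1[OF M X X_lt_1 cdf G_deriv g_le C _, where b = "1 - \<eta>" and u = "1 - x - e" and v = "1 - x + e"] x e d beta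
    by simp
  also have "\<dots> \<le> C * (2 * d) powr (beta - 1) * (2 * e)"
    using x e beta C by (intro mult_right_mono mult_left_mono powr_mono2) auto
  also have "\<dots> = C * (2 powr (beta - 1) * 2) * d powr (beta - 1) * e"
    using x by (simp add: powr_mult)
  also have "2 powr (beta - 1) * 2 = (2::real) powr beta"
    by (simp add: powr_diff)
  finally show ?thesis .
qed

lemma emp_cdf_perturbed_diff_le:
  "\<bar>emp_cdf N (\<lambda>i w. a i w + rho i w) y w - emp_cdf N a y w\<bar>
    \<le> (\<Sum>i\<in>{1..N}. (if e < \<bar>rho i w\<bar> then 1 else 0) + (if y - e < a i w \<and> a i w \<le> y + e then 1 else 0)) / real N"
proof -
  have "\<bar>emp_cdf N (\<lambda>i w. a i w + rho i w) y w - emp_cdf N a y w\<bar>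
     = \<bar>\<Sum>i\<in>{1..N}. (if a i w + rho i w \<le> y then 1 else 0) - (if a i w \<le> y then 1 else 0)\<bar> / real N"
    by (simp add: emp_cdf_def sum_subtractf flip: diff_divide_distrib)
  also have "\<dots> \<le> (\<Sum>i\<in>{1..N}. \<bar>(if a i w + rho i w \<le> y then 1 else 0) - (if a i w \<le> y then 1 else 0) :: real\<bar>) / real N"
    by (intro divide_right_mono sum_abs) auto
  also have "\<dots> \<le> (\<Sum>i\<in>{1..N}. (if e < \<bar>rho i w\<bar> then 1 else 0) + (if y - e < a i w \<and> a i w \<le> y + e then 1 else 0)) / real N"
    by (intro divide_right_mono sum_mono) auto
  finally show ?thesis .
qed

lemma borel_measurable_emp_cdf_perturbed_diff:
  assumes [measurable]: "\<And>i. a i \<in> borel_measurable M" "\<And>i. rho i \<in> borel_measurable M"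
  shows "(\<lambda>w. emp_cdf N (\<lambda>i w. a i w + rho i w) y w - emp_cdf N a y w) \<in> borel_measurable M"
  unfolding emp_cdf_def by measurable

lemma borel_measurable_interval_integral_emp_cdf_perturbed_diff:
  fixes lo hi :: real
  assumes [measurable]: "\<And>i. a i \<in> borel_measurable M" "\<And>i. rho i \<in> borel_measurable M"
  shows "(\<lambda>w. LBINT x=lo..hi. (emp_cdf N (\<lambda>i w. a i w + rho i w) (1 - x) w - emp_cdf N a (1 - x) w) / x)
    \<in> borel_measurable M"
  unfolding interval_lebesgue_integral_def set_lebesgue_integral_def emp_cdf_def by measurable

lemma nn_integral_emp_cdf_perturbed_diff_le:
  fixes a rho :: "nat \<Rightarrow> 'a \<Rightarrow> real"
  assumes "finite_measure M" and [measurable]: "\<And>i. a i \<in> borel_measurable M" "\<And>i. rho i \<in> borel_measurable M"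
    and "N \<ge> 1"
    and P: "\<And>i. i \<in> {1..N} \<Longrightarrow> measure M {w \<in> space M. e < \<bar>rho i w\<bar>} \<le> P"
    and W: "\<And>i. i \<in> {1..N} \<Longrightarrow> measure M {w \<in> space M. y - e < a i w \<and> a i w \<le> y + e} \<le> W"
  shows "(\<integral>\<^sup>+w. \<bar>emp_cdf N (\<lambda>i w. a i w + rho i w) y w - emp_cdf N a y w\<bar> \<partial>M) \<le> ennreal (P + W)"
proof -
  interpret finite_measure M by fact
  define A where "A i = {w \<in> space M. e < \<bar>rho i w\<bar>}" for i
  define B where "B i = {w \<in> space M. y - e < a i w \<and> a i w \<le> y + e}" for i
  have [measurable]: "A i \<in> sets M" "B i \<in> sets M" for i
    unfolding A_def B_def by measurable
  define f where "f w = (\<Sum>i\<in>{1..N}. indicator (A i) w + indicator (B i) w) / real N" for w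
  have "\<bar>emp_cdf N (\<lambda>i w. a i w + rho i w) y w - emp_cdf N a y w\<bar> \<le> f w" if "w \<in> space M" for w
    using emp_cdf_perturbed_diff_le[of N a rho y w e] that by (simp add: f_def A_def B_def indicator_def of_bool_def)
  then have "(\<integral>\<^sup>+w. \<bar>emp_cdf N (\<lambda>i w. a i w + rho i w) y w - emp_cdf N a y w\<bar> \<partial>M) \<le> (\<integral>\<^sup>+w. f w \<partial>M)"
    by (intro nn_integral_mono ennreal_leI)
  also have "\<dots> = ennreal (\<integral>w. f w \<partial>M)"
    unfolding f_def by (intro nn_integral_eq_integral) (auto intro!: AE_I2 divide_nonneg_nonneg sum_nonneg simp: less_top[symmetric])
  also have "(\<integral>w. f w \<partial>M) \<le> P + W"
  proof -
    have "(\<integral>w. f w \<partial>M) = (\<Sum>i\<in>{1..N}. measure M (A i) + measure M (B i)) / real N"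
      unfolding f_def by (simp add: integral_sum less_top[symmetric] Int_absorb2 A_def B_def)
    also have "\<dots> \<le> (\<Sum>i\<in>{1..N}. P + W) / real N"
      using P W by (intro divide_right_mono sum_mono add_mono) (auto simp: A_def B_def)
    also have "\<dots> = P + W"
      using \<open>N \<ge> 1\<close> by simp
    finally show ?thesis .
  qed
  finally show ?thesis
    by (simp add: ennreal_leI)
qed

lemma ennreal_abs_interval_integral_le:
  fixes f :: "real \<Rightarrow> real" and lo hi :: real
  assumes "lo \<le> hi"
  shows "ennreal \<bar>LBINT x=lo..hi. f x\<bar> \<le> (\<integral>\<^sup>+x. ennreal \<bar>f x\<bar> * indicator {lo..hi} x \<partial>lborel)"
proof -
  have "(LBINT x=lo..hi. f x) = (\<integral>x. indicator {lo..hi} x *\<^sub>R f x \<partial>lborel)"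
    using assms by (simp add: interval_integral_Icc set_lebesgue_integral_def)
  moreover have "ennreal \<bar>\<integral>x. indicator {lo..hi} x *\<^sub>R f x \<partial>lborel\<bar>
      \<le> (\<integral>\<^sup>+x. ennreal (norm (indicator {lo..hi} x *\<^sub>R f x)) \<partial>lborel)"
    by (cases "integrable lborel (\<lambda>x. indicator {lo..hi} x *\<^sub>R f x)")
       (auto simp: not_integrable_integral_eq dest: integral_norm_bound_ennreal)
  moreover have "ennreal (norm (indicator {lo..hi} x *\<^sub>R f x)) = ennreal \<bar>f x\<bar> * indicator {lo..hi} x" for x
    by (simp add: indicator_def)
  ultimately show ?thesis
    by simp
qed

lemma nn_integral_inverse_Icc:
  fixes lo hi :: real
  assumes "0 < lo" "lo \<le> hi"
  shows "(\<integral>\<^sup>+x. ennreal (1 / x) * indicator {lo..hi} x \<partial>lborel) = ennreal (ln hi - ln lo)"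
  using assms by (intro nn_integral_FTC_Icc) (auto intro!: derivative_eq_intros)

lemma nn_integral_interval_integral_emp_cdf_perturbed_diff_le:
  fixes a rho :: "nat \<Rightarrow> 'a \<Rightarrow> real"
  assumes M: "finite_measure M" and [measurable]: "\<And>i. a i \<in> borel_measurable M" "\<And>i. rho i \<in> borel_measurable M"
    and N: "N \<ge> 1" and lo: "0 < lo" "lo \<le> hi"
    and P: "\<And>i. i \<in> {1..N} \<Longrightarrow> measure M {w \<in> space M. e < \<bar>rho i w\<bar>} \<le> P"
    and W: "\<And>i x. i \<in> {1..N} \<Longrightarrow> x \<in> {lo..hi} \<Longrightarrow>
              measure M {w \<in> space M. 1 - x - e < a i w \<and> a i w \<le> 1 - x + e} \<le> W"
  shows "(\<integral>\<^sup>+w. \<bar>LBINT x=lo..hi. (emp_cdf N (\<lambda>i w. a i w + rho i w) (1 - x) w - emp_cdf N a (1 - x) w) / x\<bar> \<partial>M)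
    \<le> ennreal ((ln hi - ln lo) * (P + W))"
proof -
  interpret finite_measure M by fact
  interpret pair_sigma_finite M lborel
    by (intro pair_sigma_finite.intro sigma_finite_measure lborel.sigma_finite_measure_axioms)
  define D where "D w x = \<bar>emp_cdf N (\<lambda>i w. a i w + rho i w) (1 - x) w - emp_cdf N a (1 - x) w\<bar>" for w x
  define k where "k x = ennreal (1 / x) * indicator {lo..hi} x" for x :: real
  have [measurable]: "case_prod D \<in> borel_measurable (M \<Otimes>\<^sub>M lborel)"
    unfolding D_def emp_cdf_def by measurable
  have PW: "P + W \<ge> 0"
    using P[of 1] W[of 1 lo] N lo by (auto intro: add_nonneg_nonneg order_trans[OF measure_nonneg])
  have "(\<integral>\<^sup>+w. \<bar>LBINT x=lo..hi. (emp_cdf N (\<lambda>i w. a i w + rho i w) (1 - x) w - emp_cdf N a (1 - x) w) / x\<bar> \<partial>M)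
      \<le> (\<integral>\<^sup>+w. \<integral>\<^sup>+x. k x * D w x \<partial>lborel \<partial>M)"
  proof (intro nn_integral_mono order_trans[OF ennreal_abs_interval_integral_le[OF lo(2)]] eq_refl nn_integral_cong)
    fix w x
    show "ennreal \<bar>(emp_cdf N (\<lambda>i w. a i w + rho i w) (1 - x) w - emp_cdf N a (1 - x) w) / x\<bar> * indicator {lo..hi} x
        = k x * D w x"
      using lo by (auto simp: k_def D_def indicator_def abs_divide ennreal_mult[symmetric])
  qed
  also have "\<dots> = (\<integral>\<^sup>+x. \<integral>\<^sup>+w. k x * D w x \<partial>M \<partial>lborel)"
    unfolding k_def by (rule Fubini'[symmetric]) measurable
  also have "\<dots> = (\<integral>\<^sup>+x. k x * (\<integral>\<^sup>+w. D w x \<partial>M) \<partial>lborel)"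
    by (simp add: nn_integral_cmult)
  also have "\<dots> \<le> (\<integral>\<^sup>+x. k x * ennreal (P + W) \<partial>lborel)"
  proof (intro nn_integral_mono)
    fix x
    show "k x * (\<integral>\<^sup>+w. D w x \<partial>M) \<le> k x * ennreal (P + W)"
    proof (cases "x \<in> {lo..hi}")
      case True
      have "(\<integral>\<^sup>+w. D w x \<partial>M) \<le> ennreal (P + W)"
        unfolding D_def using P W[OF _ True]
        by (intro nn_integral_emp_cdf_perturbed_diff_le[OF M _ _ N, where e = e]) auto
      then show ?thesis
        by (rule mult_left_mono) simp
    qed (simp add: k_def)
  qed
  also have "\<dots> = ennreal (ln hi - ln lo) * ennreal (P + W)"
    unfolding k_def using nn_integral_inverse_Icc[OF lo] by (simp add: nn_integral_multc)
  finally show ?thesis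
    using lo PW by (simp add: ennreal_mult)
qed

lemma o_p_oneI_nn_integral:
  fixes Y :: "nat \<Rightarrow> 'a \<Rightarrow> real"
  assumes "finite_measure M" and [measurable]: "\<And>N. Y N \<in> borel_measurable M"
    and bound: "eventually (\<lambda>N. (\<integral>\<^sup>+w. \<bar>Y N w\<bar> \<partial>M) \<le> ennreal (B N)) sequentially"
    and B: "B \<longlonglongrightarrow> 0"
  shows "o_p_one M Y"
  unfolding o_p_one_def
proof (intro allI impI)
  fix e :: real
  assume e: "e > 0"
  interpret finite_measure M by fact
  have "measure M {w \<in> space M. e < \<bar>Y N w\<bar>} \<le> max (B N) 0 / e"
    if "(\<integral>\<^sup>+w. \<bar>Y N w\<bar> \<partial>M) \<le> ennreal (B N)" for N
  proof -
    let ?A = "{w \<in> space M. e < \<bar>Y N w\<bar>}"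
    have "ennreal (e * measure M ?A) = (\<integral>\<^sup>+w. ennreal e * indicator ?A w \<partial>M)"
      using e by (simp add: nn_integral_cmult_indicator emeasure_eq_measure ennreal_mult)
    also have "\<dots> \<le> (\<integral>\<^sup>+w. \<bar>Y N w\<bar> \<partial>M)"
      by (intro nn_integral_mono) (auto simp: indicator_def)
    also note that
    finally have "e * measure M ?A \<le> max (B N) 0"
      by (auto simp: ennreal_le_iff2)
    then show ?thesis
      using e by (simp add: field_simps)
  qed
  then have le: "eventually (\<lambda>N. measure M {w \<in> space M. e < \<bar>Y N w\<bar>} \<le> max (B N) 0 / e) sequentially"
    using bound by (auto elim: eventually_mono)
  have "(\<lambda>N. max (B N) 0) \<longlonglongrightarrow> 0"
    using tendsto_max[OF B tendsto_const[of 0]] by simp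
  then have "(\<lambda>N. max (B N) 0 / e) \<longlonglongrightarrow> 0"
    by (rule tendsto_divide_zero)
  then show "(\<lambda>N. measure M {w \<in> space M. e < \<bar>Y N w\<bar>}) \<longlonglongrightarrow> 0"
    using tendsto_sandwich[OF _ le tendsto_const] by simp
qed

lemma max_0_le_of_root_powr_le:
  fixes chi D t p :: real
  assumes "D > 0" "t > 0" "p > 0" and t: "(chi / D) powr (1 / (p + 1)) \<le> t"
  shows "max chi 0 \<le> D * t powr (p + 1)"
proof (cases "chi > 0")
  case True
  have "chi / D = ((chi / D) powr (1 / (p + 1))) powr (p + 1)"
    using True assms by (simp add: powr_powr)
  also have "\<dots> \<le> t powr (p + 1)"
    using t assms by (intro powr_mono2) auto
  finally show ?thesis
    using True assms by (simp add: field_simps)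
qed (use assms in auto)

lemma truncation_bound_le:
  fixes s d p beta chi chi' K T :: real
  assumes s: "s > 0" and d: "d > 0" and p: "p > 0" and K: "K \<ge> 0"
    and T: "(chi / d powr (p + beta)) powr (1 / (p + 1)) \<le> T"
  defines "m \<equiv> s * max (chi' / d powr beta) T"
    and "t \<equiv> T + inverse s ^ 2"
  shows "s / d powr beta * (max chi 0 / (d * t) powr p + max chi' 0 + K * d powr (beta - 1) * (d * t))
    \<le> (1 + K) * (m + inverse s) + m"
proof -
  have T0: "T \<ge> 0"
    using T powr_ge_zero order_trans by blast
  then have t: "t > 0"
    using s by (simp add: t_def add_nonneg_pos)
  have "max chi 0 \<le> d powr (p + beta) * t powr (p + 1)"
    using max_0_le_of_root_powr_le[OF _ t p] d T by (simp add: t_def add_increasing2)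
  also have "\<dots> = t * (d powr beta * (d * t) powr p)"
    using d t by (simp add: powr_add powr_mult)
  finally have "max chi 0 / (d powr beta * (d * t) powr p) \<le> t"
    using d t by (simp add: divide_le_eq mult.commute)
  moreover have "K * d powr (beta - 1) * (d * t) / d powr beta = K * t"
    using d by (simp add: powr_diff)
  moreover have "max chi' 0 / d powr beta \<le> max (chi' / d powr beta) T"
    using d T0 by (auto simp: max_def divide_le_0_iff)
  ultimately have "s * (max chi 0 / (d powr beta * (d * t) powr p) + max chi' 0 / d powr beta
      + K * d powr (beta - 1) * (d * t) / d powr beta) \<le> s * ((1 + K) * t + max (chi' / d powr beta) T)"
    using s by (intro mult_left_mono) (auto simp: algebra_simps)
  also have "\<dots> = (1 + K) * (s * T + inverse s) + m"
    using s by (simp add: m_def t_def field_simps power2_eq_square)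
  also have "\<dots> \<le> (1 + K) * (m + inverse s) + m"
    unfolding m_def using s K by (intro add_mono mult_left_mono) auto
  finally show ?thesis
    using d t by (simp add: field_simps)
qed

lemma sqrt_divide_powr:
  fixes n d b :: real
  assumes "d > 0"
  shows "sqrt (n / d powr b) = sqrt (n * d powr b) / d powr b"
proof -
  have "n / d powr b = n * d powr b / (d powr b)\<^sup>2"
    using assms by (simp add: power2_eq_square)
  then show ?thesis
    using assms by (simp add: real_sqrt_divide)
qed

lemma truncation_level_exists:
  fixes delta chi chi' :: "nat \<Rightarrow> real" and beta p K :: real
  assumes p: "p > 0" and K: "K \<ge> 0"
    and delta_pos: "eventually (\<lambda>N. delta N > 0) sequentially"
    and delta_lim: "delta \<longlonglongrightarrow> 0"
    and delta_big: "filterlim (\<lambda>N. real N * delta N powr beta) at_top sequentially"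
    and rate: "(\<lambda>N. sqrt (real N * delta N powr beta)
                 * max (chi' N / delta N powr beta) ((chi N / delta N powr (p + beta)) powr (1 / (p + 1)))
                 * ln (delta N)) \<longlonglongrightarrow> 0"
  shows "\<exists>\<epsilon>. eventually (\<lambda>N. 0 < \<epsilon> N \<and> \<epsilon> N \<le> delta N) sequentially \<and>
    (\<lambda>N. sqrt (real N / delta N powr beta) * - ln (delta N)
       * (max (chi N) 0 / \<epsilon> N powr p + max (chi' N) 0 + K * delta N powr (beta - 1) * \<epsilon> N)) \<longlonglongrightarrow> 0"
proof -
  define S where "S N = sqrt (real N * delta N powr beta) * - ln (delta N)" for N
  define T where "T N = (chi N / delta N powr (p + beta)) powr (1 / (p + 1))" for N
  define m where "m N = S N * max (chi' N / delta N powr beta) (T N)" for N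
  define t where "t N = T N + inverse (S N) ^ 2" for N
  have "m = (\<lambda>N. - (sqrt (real N * delta N powr beta)
      * max (chi' N / delta N powr beta) ((chi N / delta N powr (p + beta)) powr (1 / (p + 1))) * ln (delta N)))"
    by (simp add: fun_eq_iff m_def S_def T_def)
  then have m: "m \<longlonglongrightarrow> 0"
    using tendsto_minus[OF rate] by simp
  have "filterlim (\<lambda>N. - ln (delta N)) at_top sequentially"
    using filterlim_compose[OF ln_at_0 tendsto_imp_filterlim_at_right[OF delta_lim delta_pos]]
    by (simp add: filterlim_uminus_at_bot)
  then have "filterlim S at_top sequentially"
    unfolding S_def using filterlim_compose[OF sqrt_at_top delta_big] by (rule filterlim_at_top_mult_at_top[rotated])
  then have S: "eventually (\<lambda>N. S N \<ge> 1) sequentially" "(\<lambda>N. inverse (S N)) \<longlonglongrightarrow> 0"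
    by (simp_all add: filterlim_at_top tendsto_inverse_0_at_top)
  define B where "B N = (1 + K) * (m N + inverse (S N)) + m N" for N
  have B: "B \<longlonglongrightarrow> 0"
    unfolding B_def using tendsto_add[OF tendsto_mult[OF tendsto_const tendsto_add[OF m S(2)]] m] by simp
  have "eventually (\<lambda>N. 0 < delta N \<and> 1 \<le> S N \<and> m N + inverse (S N) < 1) sequentially"
    using delta_pos S(1) order_tendstoD(2)[OF tendsto_add[OF m S(2)], of 1, simplified]
    by eventually_elim simp
  then have "eventually (\<lambda>N. (0 < delta N * t N \<and> delta N * t N \<le> delta N) \<and>
      norm (sqrt (real N / delta N powr beta) * - ln (delta N) * (max (chi N) 0 / (delta N * t N) powr p
        + max (chi' N) 0 + K * delta N powr (beta - 1) * (delta N * t N))) \<le> B N) sequentially"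
  proof eventually_elim
    case (elim N)
    have T: "T N \<ge> 0"
      by (simp add: T_def)
    then have "0 < t N" "t N \<le> S N * t N"
      using elim by (simp_all add: t_def add_nonneg_pos)
    moreover have "S N * t N = S N * T N + inverse (S N)"
      using elim by (simp add: t_def distrib_left power2_eq_square)
    moreover have "S N * T N \<le> m N"
      unfolding m_def using elim by (intro mult_left_mono) auto
    ultimately have t: "0 < t N" "t N < 1"
      using elim by linarith+
    have c: "sqrt (real N / delta N powr beta) * - ln (delta N) = S N / delta N powr beta"
      using elim by (simp add: S_def sqrt_divide_powr)
    have "sqrt (real N / delta N powr beta) * - ln (delta N) * (max (chi N) 0 / (delta N * t N) powr p
        + max (chi' N) 0 + K * delta N powr (beta - 1) * (delta N * t N)) \<le> B N"
      unfolding c B_def m_def t_def using elim by (intro truncation_bound_le[OF _ _ p K]) (auto simp: T_def)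
    moreover have "0 \<le> sqrt (real N / delta N powr beta) * - ln (delta N) * (max (chi N) 0 / (delta N * t N) powr p
        + max (chi' N) 0 + K * delta N powr (beta - 1) * (delta N * t N))"
      unfolding c using elim t K by simp
    ultimately show ?case
      using elim t by simp
  qed
  then show ?thesis
    by (intro exI[of _ "\<lambda>N. delta N * t N"] conjI Lim_null_comparison[OF _ B]) (auto elim: eventually_mono)
qed

lemma nn_integral_abs_mult_le:
  fixes Z :: "'a \<Rightarrow> real"
  assumes "Z \<in> borel_measurable M" and "c \<ge> 0" and "(\<integral>\<^sup>+w. \<bar>Z w\<bar> \<partial>M) \<le> ennreal b"
  shows "(\<integral>\<^sup>+w. \<bar>c * Z w\<bar> \<partial>M) \<le> ennreal (c * b)"
proof -
  have "(\<integral>\<^sup>+w. \<bar>c * Z w\<bar> \<partial>M) = ennreal c * (\<integral>\<^sup>+w. \<bar>Z w\<bar> \<partial>M)"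
    using assms by (simp add: abs_mult ennreal_mult nn_integral_cmult)
  also have "\<dots> \<le> ennreal c * ennreal b"
    using assms(3) by (rule mult_left_mono) simp
  finally show ?thesis
    using assms(2) by (simp add: ennreal_mult')
qed

lemma nn_integral_perturbation_errors_le:
  fixes a rho :: "nat \<Rightarrow> 'a \<Rightarrow> real"
  assumes M: "prob_space M" and a: "\<And>i. a i \<in> borel_measurable M"
    and a_lt_1: "\<And>i w. w \<in> space M \<Longrightarrow> a i w < 1"
    and cdf: "\<And>i x. measure M {w \<in> space M. a i w \<le> x} = G x"
    and G_deriv: "\<And>x. x \<in> {1 - \<eta><..<1} \<Longrightarrow> (G has_real_derivative g x) (at x)"
    and g_le: "\<And>x. x \<in> {1 - \<eta><..<1} \<Longrightarrow> g x \<le> C * (1 - x) powr (beta - 1)"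
    and C: "C \<ge> 0" and beta: "beta \<ge> 1" and rho: "\<And>i. rho i \<in> borel_measurable M"
    and N: "N \<ge> 1" and P: "\<And>i. i \<in> {1..N} \<Longrightarrow> measure M {w \<in> space M. e < \<bar>rho i w\<bar>} \<le> P"
    and e: "0 < e" "e \<le> d" and d: "2 * d < \<eta>" and lo: "0 < lo" "lo \<le> d"
  shows "(\<integral>\<^sup>+w. \<bar>emp_cdf N (\<lambda>i w. a i w + rho i w) (1 - d) w - emp_cdf N a (1 - d) w\<bar> \<partial>M)
      \<le> ennreal (P + C * 2 powr beta * d powr (beta - 1) * e)"
    and "(\<integral>\<^sup>+w. \<bar>LBINT x=lo..d. (emp_cdf N (\<lambda>i w. a i w + rho i w) (1 - x) w - emp_cdf N a (1 - x) w) / x\<bar> \<partial>M)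
      \<le> ennreal ((ln d - ln lo) * (P + C * 2 powr beta * d powr (beta - 1) * e))"
proof -
  have W: "measure M {w \<in> space M. 1 - x - e < a i w \<and> a i w \<le> 1 - x + e} \<le> C * 2 powr beta * d powr (beta - 1) * e"
    if "0 \<le> x" "x \<le> d" for i x
    using measure_window_near_1_le[OF M a a_lt_1 cdf G_deriv g_le C beta that e d] .
  show "(\<integral>\<^sup>+w. \<bar>emp_cdf N (\<lambda>i w. a i w + rho i w) (1 - d) w - emp_cdf N a (1 - d) w\<bar> \<partial>M)
      \<le> ennreal (P + C * 2 powr beta * d powr (beta - 1) * e)"
    using W[of d] lo e by (intro nn_integral_emp_cdf_perturbed_diff_le[OF prob_space.finite_measure[OF M] a rho N P]) auto
  show "(\<integral>\<^sup>+w. \<bar>LBINT x=lo..d. (emp_cdf N (\<lambda>i w. a i w + rho i w) (1 - x) w - emp_cdf N a (1 - x) w) / x\<bar> \<partial>M)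
      \<le> ennreal ((ln d - ln lo) * (P + C * 2 powr beta * d powr (beta - 1) * e))"
    using W lo by (intro nn_integral_interval_integral_emp_cdf_perturbed_diff_le[OF prob_space.finite_measure[OF M] a rho N lo P]) auto
qed

lemma nn_integral_scaled_perturbation_errors_le:
  fixes a rho :: "nat \<Rightarrow> 'a \<Rightarrow> real"
  assumes M: "prob_space M" and a: "\<And>i. a i \<in> borel_measurable M"
    and a_lt_1: "\<And>i w. w \<in> space M \<Longrightarrow> a i w < 1"
    and cdf: "\<And>i x. measure M {w \<in> space M. a i w \<le> x} = G x"
    and G_deriv: "\<And>x. x \<in> {1 - \<eta><..<1} \<Longrightarrow> (G has_real_derivative g x) (at x)"
    and g_le: "\<And>x. x \<in> {1 - \<eta><..<1} \<Longrightarrow> g x \<le> C * (1 - x) powr (beta - 1)"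
    and C: "C \<ge> 0" and beta: "beta \<ge> 1" and rho: "\<And>i. rho i \<in> borel_measurable M"
    and N: "N \<ge> 1"
    and rho_bound: "\<forall>i\<in>{1..N}. \<forall>e\<in>{0<..<1}. measure M {w \<in> space M. e < \<bar>rho i w\<bar>} \<le> chi / e powr p + chi'"
    and e: "0 < e" "e \<le> d" and d: "0 < d" "d < exp (-1)" "2 * d < \<eta>" and r: "r \<ge> 1"
  defines "B \<equiv> sqrt (real N / d powr beta) * - ln d
    * (max chi 0 / e powr p + max chi' 0 + C * 2 powr beta * d powr (beta - 1) * e)"
  shows "(\<integral>\<^sup>+w. \<bar>sqrt (real N / d powr beta) *
      (emp_cdf N (\<lambda>i w. a i w + rho i w) (1 - d) w - emp_cdf N a (1 - d) w)\<bar> \<partial>M) \<le> ennreal B"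
    and "(\<integral>\<^sup>+w. \<bar>sqrt (real N / d powr beta) *
      (LBINT x=d powr r..d. (emp_cdf N (\<lambda>i w. a i w + rho i w) (1 - x) w - emp_cdf N a (1 - x) w) / x)\<bar> \<partial>M)
      \<le> ennreal ((r - 1) * B)"
proof -
  define c where "c = sqrt (real N / d powr beta)"
  define P where "P = max chi 0 / e powr p + max chi' 0"
  define W where "W = C * 2 powr beta * d powr (beta - 1) * e"
  have "exp (-1) < (1::real)"
    by simp
  then have "d < 1" "e < 1"
    using e d by linarith+
  have l: "1 \<le> - ln d"
    using d ln_less_cancel_iff[of d "exp (-1)"] by simp
  have P_bound: "measure M {w \<in> space M. e < \<bar>rho i w\<bar>} \<le> P" if "i \<in> {1..N}" for i
  proof -
    have "measure M {w \<in> space M. e < \<bar>rho i w\<bar>} \<le> chi / e powr p + chi'"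
      using rho_bound that e \<open>e < 1\<close> by auto
    also have "\<dots> \<le> P"
      unfolding P_def using e by (intro add_mono divide_right_mono) auto
    finally show ?thesis .
  qed
  have lo: "0 < d powr r" "d powr r \<le> d"
    using d \<open>d < 1\<close> r by (auto intro: powr_le_one_le)
  note L1 = nn_integral_perturbation_errors_le[where a = a and rho = rho,
      OF M a a_lt_1 cdf G_deriv g_le C beta rho N P_bound e d(3) lo, folded W_def]
  have c: "c \<ge> 0"
    by (simp add: c_def)
  have B_eq: "B = c * - ln d * (P + W)"
    by (simp add: B_def c_def P_def W_def)
  have "c * (P + W) \<le> B"
    unfolding B_eq using mult_right_mono[OF mult_left_mono[OF l c], of "P + W"] C e by (simp add: P_def W_def)
  then show "(\<integral>\<^sup>+w. \<bar>sqrt (real N / d powr beta) *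
      (emp_cdf N (\<lambda>i w. a i w + rho i w) (1 - d) w - emp_cdf N a (1 - d) w)\<bar> \<partial>M) \<le> ennreal B"
    using nn_integral_abs_mult_le[OF borel_measurable_emp_cdf_perturbed_diff[OF a rho] c L1(1)]
    unfolding c_def by (auto intro: order_trans ennreal_leI)
  have "c * ((ln d - ln (d powr r)) * (P + W)) = (r - 1) * B"
    unfolding B_eq using d by (simp add: ln_powr algebra_simps)
  then show "(\<integral>\<^sup>+w. \<bar>sqrt (real N / d powr beta) *
      (LBINT x=d powr r..d. (emp_cdf N (\<lambda>i w. a i w + rho i w) (1 - x) w - emp_cdf N a (1 - x) w) / x)\<bar> \<partial>M)
      \<le> ennreal ((r - 1) * B)"
    using nn_integral_abs_mult_le[OF borel_measurable_interval_integral_emp_cdf_perturbed_diff[OF a rho] c L1(2)]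
    unfolding c_def by simp
qed

theorem proposition2:
  fixes M :: "'a measure"
    and a :: "nat \<Rightarrow> 'a \<Rightarrow> real"
    and rho :: "nat \<Rightarrow> nat \<Rightarrow> 'a \<Rightarrow> real"
    and G g :: "real \<Rightarrow> real"
    and eps beta nu kappa r p :: real
    and delta chi chi' :: "nat \<Rightarrow> real"
  assumes M: "prob_space M"
    and indep: "prob_space.indep_vars M (\<lambda>_. borel) a UNIV"
    and a_range: "\<And>i w. w \<in> space M \<Longrightarrow> a i w \<in> {0<..<1}"
    and cdf: "\<And>i x. measure M {w \<in> space M. a i w \<le> x} = G x"
    and eps: "0 < eps" "eps < 1"
    and G_deriv: "\<And>x. x \<in> {1 - eps<..<1} \<Longrightarrow> (G has_real_derivative g x) (at x)"
    and g_cont: "continuous_on {1 - eps<..<1} g"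
    and params: "beta > 1" "nu > 0" "kappa > 0"
    and g_asym: "(\<lambda>x. g x - kappa * beta * (1 - x) powr (beta - 1))
                   \<in> O[at_left 1](\<lambda>x. (1 - x) powr (beta - 1) * (1 - x) powr nu)"
    and rho_meas: "\<And>N i. rho N i \<in> borel_measurable M"
    and r: "r > 1"
    and delta_pos: "eventually (\<lambda>N. delta N > 0) sequentially"
    and delta_lim: "delta \<longlonglongrightarrow> 0"
    and delta_big: "filterlim (\<lambda>N. real N * delta N powr beta) at_top sequentially"
    and p: "p \<ge> 1"
    and rho_bound: "eventually (\<lambda>N. \<forall>i\<in>{1..N}. \<forall>e\<in>{0<..<1}.
                      measure M {w \<in> space M. \<bar>rho N i w\<bar> > e} \<le> chi N / e powr p + chi' N)
                    sequentially"
    and chi_lim: "chi \<longlonglongrightarrow> 0"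
    and chi'_lim: "chi' \<longlonglongrightarrow> 0"
    and rate: "(\<lambda>N. sqrt (real N * delta N powr beta)
                 * max (chi' N / delta N powr beta)
                       ((chi N / delta N powr (p + beta)) powr (1 / (p + 1)))
                 * ln (delta N)) \<longlonglongrightarrow> 0"
  shows "o_p_one M (\<lambda>N w. sqrt (real N / delta N powr beta) *
            (emp_cdf N (\<lambda>i w. a i w + rho N i w) (1 - delta N) w - emp_cdf N a (1 - delta N) w))
         \<and> o_p_one M (\<lambda>N w. sqrt (real N / delta N powr beta) *
            (LBINT x=delta N powr r..delta N.
               (emp_cdf N (\<lambda>i w. a i w + rho N i w) (1 - x) w - emp_cdf N a (1 - x) w) / x))"
proof -
  interpret prob_space M by (rule M)
  have a_meas: "\<And>i. a i \<in> borel_measurable M"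
    using indep by (simp add: indep_vars_def)
  have a_lt_1: "\<And>i w. w \<in> space M \<Longrightarrow> a i w < 1"
    using a_range by auto
  obtain C where C: "C \<ge> 0" and "eventually (\<lambda>x. g x \<le> C * (1 - x) powr (beta - 1)) (at_left 1)"
    using bigO_imp_eventually_le_powr_at_left_1[OF _ g_asym] params(2) by auto
  then obtain b where "b < 1" and g_le_b: "\<And>x. b < x \<Longrightarrow> x < 1 \<Longrightarrow> g x \<le> C * (1 - x) powr (beta - 1)"
    by (auto simp: eventually_at_left_field)
  define \<eta> where "\<eta> = min eps (1 - b)"
  have \<eta>: "0 < \<eta>" and G_deriv': "\<And>x. x \<in> {1 - \<eta><..<1} \<Longrightarrow> (G has_real_derivative g x) (at x)"
    and g_le: "\<And>x. x \<in> {1 - \<eta><..<1} \<Longrightarrow> g x \<le> C * (1 - x) powr (beta - 1)"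
    using eps \<open>b < 1\<close> by (auto simp: \<eta>_def intro!: G_deriv g_le_b)
  obtain \<epsilon> where \<epsilon>: "eventually (\<lambda>N. 0 < \<epsilon> N \<and> \<epsilon> N \<le> delta N) sequentially"
    and bound_lim: "(\<lambda>N. sqrt (real N / delta N powr beta) * - ln (delta N) * (max (chi N) 0 / \<epsilon> N powr p
      + max (chi' N) 0 + C * 2 powr beta * delta N powr (beta - 1) * \<epsilon> N)) \<longlonglongrightarrow> 0"
    using truncation_level_exists[OF _ _ delta_pos delta_lim delta_big rate, of "C * 2 powr beta"] p C by auto
  define B where "B N = sqrt (real N / delta N powr beta) * - ln (delta N) * (max (chi N) 0 / \<epsilon> N powr p
      + max (chi' N) 0 + C * 2 powr beta * delta N powr (beta - 1) * \<epsilon> N)" for N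
  have B: "B \<longlonglongrightarrow> 0"
    using bound_lim by (simp add: B_def[abs_def])
  have small: "0 < min (exp (-1)) (\<eta> / 2)"
    using \<eta> by simp
  have ev: "eventually (\<lambda>N. 0 < \<epsilon> N \<and> \<epsilon> N \<le> delta N \<and> N \<ge> 1 \<and> 0 < delta N \<and> delta N < exp (-1) \<and> 2 * delta N < \<eta>
      \<and> (\<forall>i\<in>{1..N}. \<forall>e\<in>{0<..<1}. measure M {w \<in> space M. e < \<bar>rho N i w\<bar>} \<le> chi N / e powr p + chi' N))
      sequentially"
    using \<epsilon> rho_bound eventually_ge_at_top[of 1] delta_pos order_tendstoD(2)[OF delta_lim small]
    by eventually_elim auto
  have "eventually (\<lambda>N.
      (\<integral>\<^sup>+w. \<bar>sqrt (real N / delta N powr beta) *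
          (emp_cdf N (\<lambda>i w. a i w + rho N i w) (1 - delta N) w - emp_cdf N a (1 - delta N) w)\<bar> \<partial>M) \<le> ennreal (B N) \<and>
      (\<integral>\<^sup>+w. \<bar>sqrt (real N / delta N powr beta) *
          (LBINT x=delta N powr r..delta N. (emp_cdf N (\<lambda>i w. a i w + rho N i w) (1 - x) w - emp_cdf N a (1 - x) w) / x)\<bar> \<partial>M)
        \<le> ennreal ((r - 1) * B N)) sequentially"
    using ev unfolding B_def
    by eventually_elim (intro conjI nn_integral_scaled_perturbation_errors_le[OF M a_meas a_lt_1 cdf G_deriv' g_le C
        less_imp_le[OF params(1)] rho_meas]; use r in auto)
  then show ?thesis
    using B tendsto_mult[OF tendsto_const[of "r - 1"] B]
      borel_measurable_emp_cdf_perturbed_diff[OF a_meas rho_meas]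
      borel_measurable_interval_integral_emp_cdf_perturbed_diff[OF a_meas rho_meas]
    by (auto intro!: o_p_oneI_nn_integral[OF finite_measure] elim: eventually_mono)
qed
end
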